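(* Let $n\ge 1$, $\tau>0$, and $\mathbf{s}=[s_1,\dots,s_n]^T\in\mathbb{R}^n$. Let $A_{\mathbf{s}}[i,j]=|s_i-s_j|$ and let $\mathbb{1}$ be the all-ones vector in $\mathbb{R}^n$. Define the matrix $\widehat{P}_{\mathrm{sort}(\mathbf{s})}(\tau)\in\mathbb{R}^{n\times n}$ row by row by $$\widehat{P}_{\mathrm{sort}(\mathbf{s})}[i,:](\tau)=\mathrm{softmax}\Big[\big((n+1-2i)\mathbf{s}-A_{\mathbf{s}}\mathbb{1}\big)/\tau\Big],\qquad i=1,\dots,n,$$ i.e. $\widehat{P}_{\mathrm{sort}(\mathbf{s})}[i,j](\tau)=\dfrac{\exp\big(((n+1-2i)s_j-\sum_{k}|s_j-s_k|)/\tau\big)}{\sum_{l}\exp\big(((n+1-2i)s_l-\sum_{k}|s_l-s_k|)/\tau\big)}$. Then: (1) (Unimodality) If the entries of $\mathbf{s}$ are pairwise distinct, then for every $\tau>0$, $\widehat{P}_{\mathrm{sort}(\mathbf{s})}(\tau)$ is a unimodal row stochastic matrix, and the vector $\mathbf{u}$ with $u_i=\arg\max_j\widehat{P}_{\mathrm{sort}(\mathbf{s})}[i,j](\tau)$ satisfies $\mathbf{u}=\mathrm{sort}(\mathbf{s})$. (2) (Limiting behavior) If the entries of $\mathbf{s}$ are drawn independently from a distribution on $\mathbb{R}$ that is absolutely continuous with respect to Lebesgue measure, then almost surely, for every $i\in\{1,\dots,n\}$, $$\lim_{\tau\to0^+}\widehat{P}_{\mathrm{sort}(\mathbf{s})}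[i,:](\tau)=P_{\mathrm{sort}(\mathbf{s})}[i,:].$$
   Context: For $\mathbf{s}\in\mathbb{R}^n$, $\mathrm{sort}(\mathbf{s})$ is the permutation $\mathbf{z}$ of $\{1,\dots,n\}$ listing indices in order of decreasing value of $s$ ($z_1$ is the index of the largest entry, etc.). The permutation matrix $P_{\mathbf{z}}$ has $P_{\mathbf{z}}[i,j]=1$ iff $j=z_i$ and $0$ otherwise. An $n\times n$ matrix $U$ is unimodal row stochastic if (i) $U[i,j]\ge0$ for all $i,j$; (ii) $\sum_j U[i,j]=1$ for all $i$; (iii) the vector $\mathbf{u}$ with $u_i=\arg\max_j U[i,j]$ (each row having a unique maximizer) is a permutation of $\{1,\dots,n\}$. *)

theory Defs
  imports "HOL-Probability.Probability"
begin

text \<open>Vectors in R^n and n x n matrices are represented as functions on the index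
  set {1..n} (values outside are irrelevant).\<close>

definition A_s :: "nat \<Rightarrow> (nat \<Rightarrow> real) \<Rightarrow> nat \<Rightarrow> nat \<Rightarrow> real" where
  "A_s n s i j = \<bar>s i - s j\<bar>"

definition soft_arg :: "nat \<Rightarrow> (nat \<Rightarrow> real) \<Rightarrow> real \<Rightarrow> nat \<Rightarrow> nat \<Rightarrow> real" where
  "soft_arg n s \<tau> i j =
     ((real n + 1 - 2 * real i) * s j - (\<Sum>k\<in>{1..n}. A_s n s j k)) / \<tau>"

definition softmax :: "nat \<Rightarrow> (nat \<Rightarrow> real) \<Rightarrow> nat \<Rightarrow> real" where
  "softmax n x j = exp (x j) / (\<Sum>l\<in>{1..n}. exp (x l))"

definition Phat :: "nat \<Rightarrow> (nat \<Rightarrow> real) \<Rightarrow> real \<Rightarrow> nat \<Rightarrow> nat \<Rightarrow> real" where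
  "Phat n s \<tau> i j = softmax n (soft_arg n s \<tau> i) j"

definition sort_perm :: "nat \<Rightarrow> (nat \<Rightarrow> real) \<Rightarrow> nat \<Rightarrow> nat" where
  "sort_perm n s = (SOME z. bij_betw z {1..n} {1..n} \<and>
      (\<forall>i\<in>{1..n}. \<forall>j\<in>{1..n}. i < j \<longrightarrow> s (z i) \<ge> s (z j)))"

definition perm_mat :: "(nat \<Rightarrow> nat) \<Rightarrow> nat \<Rightarrow> nat \<Rightarrow> real" where
  "perm_mat z i j = (if j = z i then 1 else 0)"

definition is_row_argmax :: "nat \<Rightarrow> (nat \<Rightarrow> nat \<Rightarrow> real) \<Rightarrow> nat \<Rightarrow> nat \<Rightarrow> bool" where
  "is_row_argmax n U i j \<longleftrightarrow> j \<in> {1..n} \<and> (\<forall>k\<in>{1..n}. k \<noteq> j \<longrightarrow> U i k < U i j)"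

definition row_argmax :: "nat \<Rightarrow> (nat \<Rightarrow> nat \<Rightarrow> real) \<Rightarrow> nat \<Rightarrow> nat" where
  "row_argmax n U i = (THE j. is_row_argmax n U i j)"

definition unimodal_row_stochastic :: "nat \<Rightarrow> (nat \<Rightarrow> nat \<Rightarrow> real) \<Rightarrow> bool" where
  "unimodal_row_stochastic n U \<longleftrightarrow>
     (\<forall>i\<in>{1..n}. \<forall>j\<in>{1..n}. U i j \<ge> 0) \<and>
     (\<forall>i\<in>{1..n}. (\<Sum>j\<in>{1..n}. U i j) = 1) \<and>
     (\<forall>i\<in>{1..n}. \<exists>j. is_row_argmax n U i j) \<and>
     bij_betw (row_argmax n U) {1..n} {1..n}"

end

theory Submission
  imports Defs
begin

text \<open>Up to the factor 1/tau, row i of the softmax argument evaluates the concave piecewise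
  linear function f(x) = (n + 1 - 2i) x - (sum over k of |x - s k|) at the entries of s. Its slope
  is at least 1 left of the i-th largest entry of s and at most -1 right of it, so that entry is
  the strict maximiser of f among the entries of s: this gives unimodality and identifies the row
  argmax with sort(s). As tau tends to 0 the softmax of such a row concentrates on its maximiser,
  and under an absolutely continuous distribution the entries of s are almost surely distinct.\<close>

subsection \<open>The score of a rank\<close>

definition desc_rank :: "'a set \<Rightarrow> ('a \<Rightarrow> real) \<Rightarrow> 'a \<Rightarrow> nat" where
  "desc_rank A s p = card {k\<in>A. s p \<le> s k}"

definition rank_score :: "'a set \<Rightarrow> ('a \<Rightarrow> real) \<Rightarrow> nat \<Rightarrow> 'a \<Rightarrow> real" where
  "rank_score A s r j = (real (card A) + 1 - 2 * real r) * s j - (\<Sum>k\<in>A. \<bar>s j - s k\<bar>)"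

lemma rank_score_ge_below:
  assumes "finite A" and "s j \<le> s p"
  shows "rank_score A s (desc_rank A s p) j + (s p - s j) \<le> rank_score A s (desc_rank A s p) p"
proof -
  define d where "d = s p - s j"
  define r where "r = desc_rank A s p"
  have "(\<Sum>k\<in>A. \<bar>s p - s k\<bar> - \<bar>s j - s k\<bar>) \<le> (\<Sum>k\<in>A. d - (if s p \<le> s k then 2 * d else 0))"
    by (rule sum_mono) (auto simp: d_def)
  also have "\<dots> = real (card A) * d - 2 * d * real r"
    using \<open>finite A\<close>
    by (simp add: sum_subtractf sum.inter_filter[symmetric] r_def desc_rank_def)
  finally show ?thesis
    unfolding rank_score_def r_def[symmetric] d_def[symmetric]
    by (simp add: sum_subtractf d_def algebra_simps)
qed

lemma rank_score_ge_above:
  assumes "finite A" and "p \<in> A" and "s p \<le> s j"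
  shows "rank_score A s (desc_rank A s p) j + (s j - s p) \<le> rank_score A s (desc_rank A s p) p"
proof -
  define d where "d = s j - s p"
  define r where "r = desc_rank A s p"
  have below: "card {k\<in>A. s k < s p} = card A - r"
  proof -
    have "{k\<in>A. s k < s p} = A - {k\<in>A. s p \<le> s k}" by auto
    then show ?thesis
      using \<open>finite A\<close> by (simp add: card_Diff_subset r_def desc_rank_def)
  qed
  have "r \<le> card A"
    using \<open>finite A\<close> by (simp add: r_def desc_rank_def card_mono)
  have "(\<Sum>k\<in>A. - d + (if s k < s p then 2 * d else 0) + (if k = p then 2 * d else 0))
      \<le> (\<Sum>k\<in>A. \<bar>s j - s k\<bar> - \<bar>s p - s k\<bar>)"
    using \<open>s p \<le> s j\<close> by (intro sum_mono) (auto simp: d_def)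
  moreover have "(\<Sum>k\<in>A. - d + (if s k < s p then 2 * d else 0) + (if k = p then 2 * d else 0))
      = - real (card A) * d + 2 * d * real (card A - r) + 2 * d"
    using \<open>finite A\<close> \<open>p \<in> A\<close> below
    by (simp only: sum.distrib sum.delta) (simp add: sum.inter_filter[symmetric])
  ultimately show ?thesis
    unfolding rank_score_def r_def[symmetric] d_def[symmetric] using \<open>r \<le> card A\<close>
    by (simp add: sum_subtractf d_def of_nat_diff algebra_simps)
qed

lemma rank_score_strict_max:
  assumes "finite A" and "p \<in> A" and "s j \<noteq> s p"
  shows "rank_score A s (desc_rank A s p) j < rank_score A s (desc_rank A s p) p"
  using rank_score_ge_below[OF \<open>finite A\<close>, of s j p] rank_score_ge_above[OF assms(1,2), of s j]
    \<open>s j \<noteq> s p\<close> by (cases "s j \<le> s p") auto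

lemma desc_rank_less:
  assumes "finite A" and "a \<in> A" and "s a < s b"
  shows "desc_rank A s b < desc_rank A s a"
  unfolding desc_rank_def
proof (rule psubset_card_mono)
  have "a \<in> {k\<in>A. s a \<le> s k} - {k\<in>A. s b \<le> s k}"
    and "{k\<in>A. s b \<le> s k} \<subseteq> {k\<in>A. s a \<le> s k}"
    using assms by auto
  then show "{k\<in>A. s b \<le> s k} \<subset> {k\<in>A. s a \<le> s k}" by blast
qed (use assms in auto)

lemma bij_betw_desc_rank:
  assumes "finite A" and "inj_on s A"
  shows "bij_betw (desc_rank A s) A {1..card A}"
proof -
  have inj: "inj_on (desc_rank A s) A"
  proof (rule inj_onI)
    fix a b assume "a \<in> A" "b \<in> A" "desc_rank A s a = desc_rank A s b"
    then show "a = b"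
      using desc_rank_less[OF \<open>finite A\<close>, of a s b] desc_rank_less[OF \<open>finite A\<close>, of b s a]
        inj_onD[OF \<open>inj_on s A\<close>] by (metis less_irrefl linorder_neqE_linordered_idom)
  qed
  have "desc_rank A s a \<in> {1..card A}" if "a \<in> A" for a
    using that \<open>finite A\<close> unfolding desc_rank_def
    by (auto simp: card_gt_0_iff Suc_le_eq intro!: card_mono)
  then have "desc_rank A s ` A \<subseteq> {1..card A}" by blast
  moreover have "card (desc_rank A s ` A) = card {1..card A}"
    using card_image[OF inj] by simp
  ultimately show ?thesis
    using inj by (simp add: bij_betw_def card_subset_eq)
qed

lemma sort_perm_spec:
  assumes "inj_on s {1..n}"
  shows "bij_betw (sort_perm n s) {1..n} {1..n}"
    and "\<And>i j. i \<in> {1..n} \<Longrightarrow> j \<in> {1..n} \<Longrightarrow> i < j \<Longrightarrow> s (sort_perm n s j) \<le> s (sort_perm n s i)"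
proof -
  let ?A = "{1..n}"
  have rank: "bij_betw (desc_rank ?A s) ?A ?A"
    using bij_betw_desc_rank[OF _ assms] by simp
  define z where "z = the_inv_into ?A (desc_rank ?A s)"
  have z: "bij_betw z ?A ?A"
    unfolding z_def by (rule bij_betw_the_inv_into[OF rank])
  have "s (z j) \<le> s (z i)" if "i \<in> ?A" "j \<in> ?A" "i < j" for i j
  proof (rule ccontr)
    assume "\<not> s (z j) \<le> s (z i)"
    then have "desc_rank ?A s (z j) < desc_rank ?A s (z i)"
      using desc_rank_less[of ?A "z i" s "z j"] z that by (auto dest: bij_betwE)
    then show False
      using that rank by (simp add: z_def f_the_inv_into_f_bij_betw)
  qed
  then have "\<exists>z. bij_betw z ?A ?A \<and> (\<forall>i\<in>?A. \<forall>j\<in>?A. i < j \<longrightarrow> s (z i) \<ge> s (z j))"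
    using z by blast
  then have "bij_betw (sort_perm n s) ?A ?A \<and>
      (\<forall>i\<in>?A. \<forall>j\<in>?A. i < j \<longrightarrow> s (sort_perm n s i) \<ge> s (sort_perm n s j))"
    unfolding sort_perm_def by (rule someI_ex)
  then show "bij_betw (sort_perm n s) ?A ?A"
    and "\<And>i j. i \<in> ?A \<Longrightarrow> j \<in> ?A \<Longrightarrow> i < j \<Longrightarrow> s (sort_perm n s j) \<le> s (sort_perm n s i)"
    by blast+
qed

lemma sort_perm_le_iff:
  assumes "inj_on s {1..n}" and "i \<in> {1..n}" and "m \<in> {1..n}"
  shows "s (sort_perm n s i) \<le> s (sort_perm n s m) \<longleftrightarrow> m \<le> i"
proof
  assume le: "s (sort_perm n s i) \<le> s (sort_perm n s m)"
  show "m \<le> i"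
  proof (rule ccontr)
    assume "\<not> m \<le> i"
    then have "s (sort_perm n s i) = s (sort_perm n s m)"
      using le sort_perm_spec(2)[OF assms(1,2,3)] by simp
    then have "i = m"
      using assms sort_perm_spec(1)[OF assms(1)]
      by (metis bij_betwE bij_betw_imp_inj_on inj_on_eq_iff)
    with \<open>\<not> m \<le> i\<close> show False by simp
  qed
next
  assume "m \<le> i"
  then show "s (sort_perm n s i) \<le> s (sort_perm n s m)"
    using sort_perm_spec(2)[OF assms(1,3,2)] by (cases "m = i") auto
qed

lemma desc_rank_sort_perm:
  assumes "inj_on s {1..n}" and "i \<in> {1..n}"
  shows "desc_rank {1..n} s (sort_perm n s i) = i"
proof -
  let ?z = "sort_perm n s"
  have bij: "bij_betw ?z {1..n} {1..n}" by (rule sort_perm_spec(1)[OF assms(1)])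
  have "{k\<in>{1..n}. s (?z i) \<le> s k} = ?z ` {m\<in>{1..n}. s (?z i) \<le> s (?z m)}"
    using Compr_image_eq[of ?z "{1..n}" "\<lambda>k. s (?z i) \<le> s k"] bij_betw_imp_surj_on[OF bij]
    by simp
  also have "{m\<in>{1..n}. s (?z i) \<le> s (?z m)} = {1..i}"
    using sort_perm_le_iff[OF assms] assms(2) by auto
  finally have "{k\<in>{1..n}. s (?z i) \<le> s k} = ?z ` {1..i}" .
  moreover have "inj_on ?z {1..i}"
    by (rule inj_on_subset[OF bij_betw_imp_inj_on[OF bij]]) (use assms(2) in auto)
  ultimately show ?thesis
    unfolding desc_rank_def by (simp add: card_image)
qed

lemma rank_score_sort_perm_strict_max:
  assumes "inj_on s {1..n}" and "i \<in> {1..n}" and "j \<in> {1..n}" and "j \<noteq> sort_perm n s i"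
  shows "rank_score {1..n} s i j < rank_score {1..n} s i (sort_perm n s i)"
proof -
  have "sort_perm n s i \<in> {1..n}"
    using sort_perm_spec(1)[OF assms(1)] assms(2) by (auto dest: bij_betwE)
  moreover from this have "s j \<noteq> s (sort_perm n s i)"
    using assms by (meson inj_on_contraD)
  ultimately show ?thesis
    using rank_score_strict_max[of "{1..n}" "sort_perm n s i" s j] desc_rank_sort_perm[OF assms(1,2)]
    by simp
qed

subsection \<open>Softmax\<close>

lemma softmax_nonneg: "0 \<le> softmax n x j"
  unfolding softmax_def by (simp add: sum_nonneg)

lemma sum_softmax:
  assumes "n \<ge> 1"
  shows "(\<Sum>j\<in>{1..n}. softmax n x j) = 1"
proof -
  have "(\<Sum>l\<in>{1..n}. exp (x l)) > 0"
    using assms by (intro sum_pos) auto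
  then show ?thesis
    unfolding softmax_def by (simp add: sum_divide_distrib[symmetric])
qed

lemma softmax_less_iff:
  assumes "n \<ge> 1"
  shows "softmax n x j < softmax n x k \<longleftrightarrow> x j < x k"
proof -
  have "(\<Sum>l\<in>{1..n}. exp (x l)) > 0"
    using assms by (intro sum_pos) auto
  then show ?thesis
    unfolding softmax_def by (simp add: divide_less_cancel)
qed

lemma softmax_shift: "softmax n (\<lambda>l. x l - c) j = softmax n x j"
proof -
  have "(\<Sum>l\<in>{1..n}. exp (x l - c)) = (\<Sum>l\<in>{1..n}. exp (x l)) / exp c"
    by (simp add: exp_diff sum_divide_distrib)
  then show ?thesis
    unfolding softmax_def by (simp add: exp_diff)
qed

lemma tendsto_exp_div_at_right_0:
  fixes c :: real
  assumes "c < 0"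
  shows "((\<lambda>\<tau>. exp (c / \<tau>)) \<longlongrightarrow> 0) (at_right 0)"
proof -
  have "filterlim (\<lambda>\<tau>::real. c * inverse \<tau>) at_bot (at_right 0)"
    by (rule filterlim_tendsto_neg_mult_at_bot[OF tendsto_const assms filterlim_inverse_at_top_right])
  then have "filterlim (\<lambda>\<tau>::real. c / \<tau>) at_bot (at_right 0)"
    by (simp add: divide_inverse)
  from filterlim_compose[OF exp_at_bot this] show ?thesis .
qed

lemma tendsto_softmax_at_right_0:
  assumes "p \<in> {1..n}" and "j \<in> {1..n}"
    and max: "\<And>l. l \<in> {1..n} \<Longrightarrow> l \<noteq> p \<Longrightarrow> x l < x p"
  shows "((\<lambda>\<tau>. softmax n (\<lambda>l. x l / \<tau>) j) \<longlongrightarrow> (if j = p then 1 else 0)) (at_right 0)"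
proof -
  \<comment> \<open>After shifting by the maximum every exponent except the one at p tends to minus infinity.\<close>
  have exp_lim: "((\<lambda>\<tau>. exp ((x l - x p) / \<tau>)) \<longlongrightarrow> (if l = p then 1 else 0)) (at_right 0)"
    if "l \<in> {1..n}" for l
    using tendsto_exp_div_at_right_0[of "x l - x p"] max[OF that] by (cases "l = p") simp_all
  have "((\<lambda>\<tau>. \<Sum>l\<in>{1..n}. exp ((x l - x p) / \<tau>)) \<longlongrightarrow> (\<Sum>l\<in>{1..n}. if l = p then 1 else 0)) (at_right 0)"
    by (intro tendsto_sum exp_lim)
  then have "((\<lambda>\<tau>. \<Sum>l\<in>{1..n}. exp ((x l - x p) / \<tau>)) \<longlongrightarrow> 1) (at_right 0)"
    using \<open>p \<in> {1..n}\<close> by simp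
  then have "((\<lambda>\<tau>. softmax n (\<lambda>l. (x l - x p) / \<tau>) j) \<longlongrightarrow> (if j = p then 1 else 0) / 1) (at_right 0)"
    unfolding softmax_def by (intro tendsto_divide exp_lim[OF \<open>j \<in> {1..n}\<close>]) simp_all
  moreover have "softmax n (\<lambda>l. (x l - x p) / \<tau>) j = softmax n (\<lambda>l. x l / \<tau>) j" for \<tau>
    using softmax_shift[of n "\<lambda>l. x l / \<tau>" "x p / \<tau>" j] by (simp add: diff_divide_distrib)
  ultimately show ?thesis by simp
qed

lemma Phat_eq_softmax: "Phat n s \<tau> i = softmax n (\<lambda>j. rank_score {1..n} s i j / \<tau>)"
proof -
  have "Phat n s \<tau> i = softmax n (soft_arg n s \<tau> i)"
    by (simp add: fun_eq_iff Phat_def)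
  also have "soft_arg n s \<tau> i = (\<lambda>j. rank_score {1..n} s i j / \<tau>)"
    by (simp add: fun_eq_iff soft_arg_def rank_score_def A_s_def)
  finally show ?thesis .
qed

lemma row_argmax_eqI:
  assumes "is_row_argmax n U i j"
  shows "row_argmax n U i = j"
  unfolding row_argmax_def
proof (rule the_equality)
  fix j' assume "is_row_argmax n U i j'"
  with assms show "j' = j"
    unfolding is_row_argmax_def by (metis less_asym)
qed (rule assms)

lemma Phat_is_row_argmax:
  assumes "n \<ge> 1" and "inj_on s {1..n}" and "\<tau> > 0" and "i \<in> {1..n}"
  shows "is_row_argmax n (Phat n s \<tau>) i (sort_perm n s i)"
  unfolding is_row_argmax_def Phat_eq_softmax softmax_less_iff[OF \<open>n \<ge> 1\<close>]
proof (intro conjI ballI impI)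
  show "sort_perm n s i \<in> {1..n}"
    using sort_perm_spec(1)[OF assms(2)] assms(4) by (auto dest: bij_betwE)
  fix k assume "k \<in> {1..n}" and "k \<noteq> sort_perm n s i"
  then show "rank_score {1..n} s i k / \<tau> < rank_score {1..n} s i (sort_perm n s i) / \<tau>"
    using rank_score_sort_perm_strict_max[OF assms(2,4)] \<open>\<tau> > 0\<close>
    by (simp add: divide_strict_right_mono)
qed

lemma Phat_unimodal_row_stochastic:
  assumes "n \<ge> 1" and "inj_on s {1..n}" and "\<tau> > 0"
  shows "unimodal_row_stochastic n (Phat n s \<tau>)"
    and "\<And>i. i \<in> {1..n} \<Longrightarrow> row_argmax n (Phat n s \<tau>) i = sort_perm n s i"
proof -
  show argmax: "row_argmax n (Phat n s \<tau>) i = sort_perm n s i" if "i \<in> {1..n}" for i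
    by (rule row_argmax_eqI[OF Phat_is_row_argmax[OF assms that]])
  have "bij_betw (row_argmax n (Phat n s \<tau>)) {1..n} {1..n}"
    using bij_betw_cong[of "{1..n}", OF argmax] sort_perm_spec(1)[OF assms(2)] by simp
  moreover have "\<exists>j. is_row_argmax n (Phat n s \<tau>) i j" if "i \<in> {1..n}" for i
    using Phat_is_row_argmax[OF assms that] ..
  ultimately show "unimodal_row_stochastic n (Phat n s \<tau>)"
    unfolding unimodal_row_stochastic_def Phat_eq_softmax
    using softmax_nonneg sum_softmax[OF \<open>n \<ge> 1\<close>] by blast
qed

lemma Phat_tendsto_perm_mat:
  assumes "inj_on s {1..n}" and "i \<in> {1..n}" and "j \<in> {1..n}"
  shows "((\<lambda>\<tau>. Phat n s \<tau> i j) \<longlongrightarrow> perm_mat (sort_perm n s) i j) (at_right 0)"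
proof -
  have "sort_perm n s i \<in> {1..n}"
    using sort_perm_spec(1)[OF assms(1)] assms(2) by (auto dest: bij_betwE)
  from tendsto_softmax_at_right_0[of "sort_perm n s i" n j "rank_score {1..n} s i",
      OF this assms(3) rank_score_sort_perm_strict_max[OF assms(1,2)]]
  show ?thesis
    unfolding Phat_eq_softmax perm_mat_def .
qed

subsection \<open>Almost sure distinctness\<close>

lemma AE_ne_if_absolutely_continuous:
  fixes \<mu> :: "real measure"
  assumes "sets \<mu> = sets borel" and "absolutely_continuous lborel \<mu>"
  shows "AE y in \<mu>. y \<noteq> x"
  using absolutely_continuous_AE[OF _ assms(2) AE_lborel_singleton[of x]] assms(1) by simp

lemma AE_pair_measure_ne:
  fixes \<mu> :: "real measure"
  assumes "sigma_finite_measure \<mu>" and "sets \<mu> = sets borel" and atomless: "\<And>x. AE y in \<mu>. y \<noteq> x"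
  shows "AE x in \<mu> \<Otimes>\<^sub>M \<mu>. fst x \<noteq> snd x"
proof -
  interpret pair_sigma_finite \<mu> \<mu>
    by (simp add: assms(1) pair_sigma_finite.intro)
  have "sets (\<mu> \<Otimes>\<^sub>M \<mu>) = sets (borel \<Otimes>\<^sub>M borel)"
    by (intro sets_pair_measure_cong assms(2))
  moreover have "{x\<in>space (borel \<Otimes>\<^sub>M borel). fst x \<noteq> snd x} \<in> sets (borel \<Otimes>\<^sub>M (borel :: real measure))"
    by measurable
  ultimately have "{x\<in>space (\<mu> \<Otimes>\<^sub>M \<mu>). fst x \<noteq> snd x} \<in> sets (\<mu> \<Otimes>\<^sub>M \<mu>)"
    using sets_eq_imp_space_eq by metis
  moreover have "AE y in \<mu>. x \<noteq> y" for x
    using atomless[of x] by (rule eventually_mono) simp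
  ultimately show ?thesis
    by (intro AE_pair_measure) simp_all
qed

lemma AE_PiM_coordinates_ne:
  fixes \<mu> :: "real measure"
  assumes "prob_space \<mu>" and "sets \<mu> = sets borel" and "\<And>x. AE y in \<mu>. y \<noteq> x"
    and "i \<in> I" and "j \<in> I" and "i \<noteq> j"
  shows "AE \<omega> in PiM I (\<lambda>_. \<mu>). \<omega> i \<noteq> \<omega> j"
proof -
  have \<mu>: "sigma_finite_measure \<mu>"
    using assms(1) by (rule prob_space_imp_sigma_finite)
  have "case_bool \<mu> \<mu> = (\<lambda>_. \<mu>)" by (auto split: bool.split)
  then have eq: "\<mu> \<Otimes>\<^sub>M \<mu> = distr (PiM UNIV (\<lambda>_::bool. \<mu>)) (\<mu> \<Otimes>\<^sub>M \<mu>) (\<lambda>x. (x True, x False))"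
    using pair_measure_eq_distr_PiM[OF \<mu> \<mu>] by metis
  have pair_meas: "(\<lambda>x. (x True, x False)) \<in> PiM UNIV (\<lambda>_::bool. \<mu>) \<rightarrow>\<^sub>M \<mu> \<Otimes>\<^sub>M \<mu>"
    by measurable
  have pair_distr: "AE x in distr (PiM UNIV (\<lambda>_::bool. \<mu>)) (\<mu> \<Otimes>\<^sub>M \<mu>) (\<lambda>x. (x True, x False)).
      fst x \<noteq> snd x"
    unfolding eq[symmetric] by (rule AE_pair_measure_ne[OF \<mu> assms(2,3)])
  have bool: "AE x in PiM UNIV (\<lambda>_::bool. \<mu>). x True \<noteq> x False"
    using AE_distrD[OF pair_meas pair_distr] by simp
  \<comment> \<open>Transport along the reindexing of the coordinates i and j by True and False.\<close>
  define f where "f b = (if b then i else j)" for b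
  have reindex_meas: "(\<lambda>\<omega>. \<lambda>b\<in>UNIV. \<omega> (f b)) \<in> PiM I (\<lambda>_. \<mu>) \<rightarrow>\<^sub>M PiM UNIV (\<lambda>_. \<mu>)"
    using assms by (intro measurable_restrict) (auto simp: f_def)
  have reindex: "distr (PiM I (\<lambda>_. \<mu>)) (PiM UNIV (\<lambda>_. \<mu>)) (\<lambda>\<omega>. \<lambda>b\<in>UNIV. \<omega> (f b)) = PiM UNIV (\<lambda>_. \<mu>)"
    using distr_PiM_reindex[of I "\<lambda>_. \<mu>" f UNIV] assms by (simp add: f_def inj_on_def)
  have reindex_distr: "AE x in distr (PiM I (\<lambda>_. \<mu>)) (PiM UNIV (\<lambda>_. \<mu>)) (\<lambda>\<omega>. \<lambda>b\<in>UNIV. \<omega> (f b)).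
      x True \<noteq> x False"
    unfolding reindex by (rule bool)
  from AE_distrD[OF reindex_meas reindex_distr] show ?thesis
    by (simp add: f_def)
qed

lemma AE_PiM_inj_on:
  fixes \<mu> :: "real measure"
  assumes "finite I" and "prob_space \<mu>" and "sets \<mu> = sets borel"
    and "\<And>x. AE y in \<mu>. y \<noteq> x"
  shows "AE \<omega> in PiM I (\<lambda>_. \<mu>). inj_on \<omega> I"
proof -
  have "finite (I \<times> I)" using \<open>finite I\<close> by simp
  then have "AE \<omega> in PiM I (\<lambda>_. \<mu>). \<forall>(i, j)\<in>I \<times> I. i \<noteq> j \<longrightarrow> \<omega> i \<noteq> \<omega> j"
    using AE_PiM_coordinates_ne[OF assms(2-4)] by (intro AE_finite_allI) auto
  then show ?thesis
    by (rule eventually_mono) (auto simp: inj_on_def)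
qed

theorem theorem1:
  fixes n :: nat
  assumes "n \<ge> 1"
  shows "(\<forall>(s :: nat \<Rightarrow> real) (\<tau> :: real). inj_on s {1..n} \<longrightarrow> \<tau> > 0 \<longrightarrow>
            unimodal_row_stochastic n (Phat n s \<tau>) \<and>
            (\<forall>i\<in>{1..n}. row_argmax n (Phat n s \<tau>) i = sort_perm n s i))
       \<and>
         (\<forall>\<mu> :: real measure. prob_space \<mu> \<longrightarrow> sets \<mu> = sets borel \<longrightarrow>
            absolutely_continuous lborel \<mu> \<longrightarrow>
            (AE s in PiM {1..n} (\<lambda>_. \<mu>).
               \<forall>i\<in>{1..n}. \<forall>j\<in>{1..n}.
                 ((\<lambda>\<tau>. Phat n s \<tau> i j) \<longlongrightarrow> perm_mat (sort_perm n s) i j) (at_right 0)))"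
proof (rule conjI; intro allI impI)
  fix s :: "nat \<Rightarrow> real" and \<tau> :: real
  assume "inj_on s {1..n}" and "\<tau> > 0"
  from Phat_unimodal_row_stochastic[OF assms this]
  show "unimodal_row_stochastic n (Phat n s \<tau>) \<and>
      (\<forall>i\<in>{1..n}. row_argmax n (Phat n s \<tau>) i = sort_perm n s i)"
    by blast
next
  fix \<mu> :: "real measure"
  assume "prob_space \<mu>" and "sets \<mu> = sets borel" and "absolutely_continuous lborel \<mu>"
  then have "AE s in PiM {1..n} (\<lambda>_. \<mu>). inj_on s {1..n}"
    by (intro AE_PiM_inj_on AE_ne_if_absolutely_continuous) simp_all
  then show "AE s in PiM {1..n} (\<lambda>_. \<mu>). \<forall>i\<in>{1..n}. \<forall>j\<in>{1..n}.
      ((\<lambda>\<tau>. Phat n s \<tau> i j) \<longlongrightarrow> perm_mat (sort_perm n s) i j) (at_right 0)"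
    by (rule eventually_mono) (simp add: Phat_tendsto_perm_mat)
qed

end
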